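(* Let $\Theta\subset[0,1]$ be compact, $A=[0,1]$, and let $u:A\times\Theta\to\mathbb R$ be continuous, differentiable in $a$, with $u_a=\partial u/\partial a$ continuous on $A\times\Theta$. The following are equivalent: (1) For every $a\in A$ and every $\mu\in\Delta(\Theta)$, $\int u(a,\theta)\,d\mu=0$ implies $\int u_a(a,\theta)\,d\mu<0$. (2) For all $\theta,\theta'\in\Theta$ and $a\in A$: $u(a,\theta)=0\Rightarrow u_a(a,\theta)<0$; and $u(a,\theta)<0<u(a,\theta')\Rightarrow u(a,\theta')u_a(a,\theta)-u(a,\theta)u_a(a,\theta')<0$. (3) There exists a differentiable function $g:A\to(0,\infty)$ such that $\tilde u(a,\theta)=u(a,\theta)/g(a)$ satisfies $\tilde u_a(a,\theta)<0$ for all $(a,\theta)\in A\times\Theta$.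
   Context: $\Delta(\Theta)$ denotes the set of Borel probability measures on $\Theta$. *)

theory Defs
  imports "HOL-Probability.Probability"
begin

definition prob_measures_on :: "real set \<Rightarrow> real measure set" where
  "prob_measures_on \<Theta> = {M. prob_space M \<and> sets M = sets (restrict_space borel \<Theta>)}"

end

theory Submission
  imports Defs
begin

text \<open>For a fixed action \<open>a\<close>, condition (2) says exactly that the points \<open>(u(a,\<theta>), u\<^sub>a(a,\<theta>))\<close>,
\<open>\<theta> \<in> \<Theta>\<close>, lie strictly below some line through the origin: \<open>u\<^sub>a(a,\<theta>) < k u(a,\<theta>)\<close> for a single
slope \<open>k\<close>. Integrating this inequality against a belief under which \<open>u\<close> has mean zero gives (1), and
two-point beliefs recover (2) from (1). By compactness of \<open>\<Theta>\<close> a slope that works at \<open>a\<close> works near \<open>a\<close>,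
and a partition of unity glues these local slopes into a continuous \<open>k(a)\<close>; then
\<open>g(a) = exp \<integral>\<^sub>0\<^sup>a k\<close> gives \<open>(u/g)\<^sub>a = (u\<^sub>a - k u)/g < 0\<close>, which is (3). Conversely, for \<open>g\<close> as in (3) the
slope \<open>g'(a)/g(a)\<close> works at every \<open>a\<close>.\<close>

section \<open>Separating slopes on a compact parameter set\<close>

lemma compact_Collect_preimage_closed:
  fixes f :: "'a::t2_space \<Rightarrow> 'b::topological_space"
  assumes "compact S" "continuous_on S f" "closed T"
  shows "compact {x\<in>S. f x \<in> T}"
proof -
  have "closed (S \<inter> f -` T)"
    using assms compact_imp_closed continuous_closed_preimage by blast
  then have "compact (S \<inter> (S \<inter> f -` T))"
    using assms(1) by blast
  moreover have "{x\<in>S. f x \<in> T} = S \<inter> (S \<inter> f -` T)"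
    by auto
  ultimately show ?thesis
    by simp
qed

lemma compact_positive_lower_bound:
  fixes f :: "'a::topological_space \<Rightarrow> real"
  assumes "compact S" "continuous_on S f" "\<forall>x\<in>S. 0 < f x"
  shows "\<exists>c>0. \<forall>x\<in>S. c \<le> f x"
proof (cases "S = {}")
  case False
  then obtain x0 where "x0 \<in> S" "\<forall>x\<in>S. f x0 \<le> f x"
    using continuous_attains_inf[OF assms(1) _ assms(2)] by blast
  then show ?thesis
    using assms(3) by blast
qed (auto intro: exI[of _ 1])

lemma continuous_on_slice:
  assumes "continuous_on (A \<times> \<Theta>) (\<lambda>(a, \<theta>). F a \<theta>)" "a \<in> A"
  shows "continuous_on \<Theta> (F a)"
proof -
  have "continuous_on \<Theta> (\<lambda>\<theta>. (\<lambda>(a, \<theta>). F a \<theta>) (a, \<theta>))"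
    by (rule continuous_on_compose2[OF assms(1)]) (use assms(2) in \<open>auto intro: continuous_intros\<close>)
  then show ?thesis
    by simp
qed

text \<open>Condition (2) at a fixed action \<open>a\<close>, with \<open>f = u(a,\<cdot>)\<close> and \<open>h = u\<^sub>a(a,\<cdot>)\<close>.\<close>

definition crossing_condition :: "'a set \<Rightarrow> ('a \<Rightarrow> real) \<Rightarrow> ('a \<Rightarrow> real) \<Rightarrow> bool" where
  "crossing_condition \<Theta> f h \<longleftrightarrow>
     (\<forall>\<theta>\<in>\<Theta>. f \<theta> = 0 \<longrightarrow> h \<theta> < 0) \<and>
     (\<forall>\<theta>\<in>\<Theta>. \<forall>\<theta>'\<in>\<Theta>. f \<theta> < 0 \<and> 0 < f \<theta>' \<longrightarrow> f \<theta>' * h \<theta> - f \<theta> * h \<theta>' < 0)"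

lemma crossing_condition_if_slope:
  assumes "\<forall>\<theta>\<in>\<Theta>. h \<theta> < f \<theta> * k"
  shows "crossing_condition \<Theta> f h"
  unfolding crossing_condition_def
proof (intro conjI ballI impI)
  fix \<theta> assume "\<theta> \<in> \<Theta>" "f \<theta> = 0"
  then have "h \<theta> < f \<theta> * k"
    using assms by blast
  then show "h \<theta> < 0"
    using \<open>f \<theta> = 0\<close> by simp
next
  fix \<theta> \<theta>' assume \<theta>: "\<theta> \<in> \<Theta>" "\<theta>' \<in> \<Theta>" and sign: "f \<theta> < 0 \<and> 0 < f \<theta>'"
  have "f \<theta>' * h \<theta> < f \<theta>' * (f \<theta> * k)"
    using assms \<theta> sign by simp
  moreover have "- f \<theta> * h \<theta>' < - f \<theta> * (f \<theta>' * k)"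
    using assms \<theta> sign by (intro mult_strict_left_mono) auto
  ultimately show "f \<theta>' * h \<theta> - f \<theta> * h \<theta>' < 0"
    by (simp add: algebra_simps)
qed

lemma margin_near_zeros:
  fixes f h :: "'a::topological_space \<Rightarrow> real"
  assumes "compact \<Theta>" "continuous_on \<Theta> f" "continuous_on \<Theta> h"
    and "\<forall>\<theta>\<in>\<Theta>. f \<theta> = 0 \<longrightarrow> h \<theta> < 0"
  shows "\<exists>c>0. \<forall>\<theta>\<in>\<Theta>. \<bar>f \<theta>\<bar> < c \<longrightarrow> h \<theta> \<le> - c"
proof -
  have cont: "continuous_on \<Theta> (\<lambda>\<theta>. max \<bar>f \<theta>\<bar> (- h \<theta>))"
    using assms(2,3) by (intro continuous_intros)
  have pos: "\<forall>\<theta>\<in>\<Theta>. 0 < max \<bar>f \<theta>\<bar> (- h \<theta>)"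
  proof
    fix \<theta> assume "\<theta> \<in> \<Theta>"
    then show "0 < max \<bar>f \<theta>\<bar> (- h \<theta>)"
      using assms(4) by (cases "f \<theta> = 0") (simp_all add: less_max_iff_disj)
  qed
  obtain c where "c > 0" and c: "\<forall>\<theta>\<in>\<Theta>. c \<le> max \<bar>f \<theta>\<bar> (- h \<theta>)"
    using compact_positive_lower_bound[OF assms(1) cont pos] by blast
  have "h \<theta> \<le> - c" if "\<theta> \<in> \<Theta>" "\<bar>f \<theta>\<bar> < c" for \<theta>
  proof -
    have "c \<le> max \<bar>f \<theta>\<bar> (- h \<theta>)"
      using c that(1) by blast
    then have "c \<le> \<bar>f \<theta>\<bar> \<or> c \<le> - h \<theta>"
      by (simp only: le_max_iff_disj)
    then show ?thesis
      using that(2) by linarith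
  qed
  then show ?thesis
    using \<open>c > 0\<close> by blast
qed

lemma value_between_compact_images:
  fixes r s :: "'a::topological_space \<Rightarrow> real"
  assumes "compact P" "continuous_on P r" "compact N" "continuous_on N s"
    and "\<forall>x\<in>P. \<forall>y\<in>N. r x < s y" "0 < K" "\<forall>x\<in>P. r x < K" "\<forall>y\<in>N. - K < s y"
  shows "\<exists>k. \<bar>k\<bar> \<le> K \<and> (\<forall>x\<in>P. r x < k) \<and> (\<forall>y\<in>N. k < s y)"
proof -
  have "compact (insert (- K) (r ` P))" "compact (insert K (s ` N))"
    using assms by (auto intro!: compact_insert compact_continuous_image)
  then obtain lo hi where lo: "lo \<in> insert (- K) (r ` P)" "\<forall>z\<in>insert (- K) (r ` P). z \<le> lo"
    and hi: "hi \<in> insert K (s ` N)" "\<forall>z\<in>insert K (s ` N). hi \<le> z"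
    using compact_attains_sup[of "insert (- K) (r ` P)"] compact_attains_inf[of "insert K (s ` N)"]
    by blast
  have "lo < hi"
    using lo(1) hi(1) assms(5-8) by auto
  then show ?thesis
    using lo hi by (intro exI[of _ "(lo + hi) / 2"]) auto
qed

lemma slope_bounds_off_zeros:
  fixes f h :: "'a \<Rightarrow> real"
  assumes c: "0 < c" and near_zero: "\<forall>\<theta>\<in>\<Theta>. \<bar>f \<theta>\<bar> < c \<longrightarrow> h \<theta> \<le> - c"
    and B: "\<forall>\<theta>\<in>\<Theta>. \<bar>h \<theta>\<bar> \<le> B"
  shows "\<exists>K \<eta>. 0 < K \<and> 0 < \<eta> \<and> (\<forall>\<theta>\<in>\<Theta>. \<eta> \<le> \<bar>f \<theta>\<bar> \<longrightarrow> h \<theta> < K * \<bar>f \<theta>\<bar>) \<and>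
    (\<forall>\<theta>\<in>\<Theta>. \<forall>k. \<bar>f \<theta>\<bar> < \<eta> \<and> \<bar>k\<bar> \<le> K \<longrightarrow> h \<theta> < f \<theta> * k)"
proof -
  \<comment> \<open>\<open>K c\<close> exceeds every value of \<open>h\<close>, and \<open>K \<eta> = c\<close> keeps \<open>f k\<close> above \<open>-c\<close> on the strip \<open>|f| < \<eta>\<close>.\<close>
  define K where "K = max B 0 / c + 1"
  define \<eta> where "\<eta> = c / K"
  have "0 \<le> max B 0 / c"
    using c by simp
  then have K: "1 \<le> K" "B < K * c"
    using c by (auto simp: K_def distrib_right)
  have \<eta>: "0 < \<eta>" "\<eta> \<le> c" "\<eta> * K = c"
    using c K by (auto simp: \<eta>_def field_simps)
  have "h \<theta> < K * \<bar>f \<theta>\<bar>" if \<theta>: "\<theta> \<in> \<Theta>" "\<eta> \<le> \<bar>f \<theta>\<bar>" for \<theta>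
  proof (cases "c \<le> \<bar>f \<theta>\<bar>")
    case True
    have "h \<theta> \<le> B"
      using B \<theta>(1) abs_ge_self[of "h \<theta>"] by (meson order.trans)
    then show ?thesis
      using True K mult_left_mono[of c "\<bar>f \<theta>\<bar>" K] by linarith
  next
    case False
    then have "h \<theta> \<le> - c"
      using near_zero \<theta> by auto
    moreover have "0 < K * \<bar>f \<theta>\<bar>"
      using K \<eta> \<theta>(2) by (intro mult_pos_pos) auto
    ultimately show ?thesis
      using c by linarith
  qed
  moreover have "h \<theta> < f \<theta> * k" if \<theta>: "\<theta> \<in> \<Theta>" "\<bar>f \<theta>\<bar> < \<eta>" and k: "\<bar>k\<bar> \<le> K" for \<theta> k
  proof -
    have "\<bar>f \<theta> * k\<bar> \<le> \<bar>f \<theta>\<bar> * K"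
      using k by (simp add: abs_mult mult_left_mono)
    also have "\<dots> < \<eta> * K"
      using \<theta>(2) K by (intro mult_strict_right_mono) auto
    finally have "- c < f \<theta> * k"
      using \<eta>(3) by (simp add: abs_less_iff)
    moreover have "h \<theta> \<le> - c"
      using near_zero \<theta> \<eta>(2) by auto
    ultimately show ?thesis
      by linarith
  qed
  ultimately show ?thesis
    using K(1) \<eta>(1) by (intro exI[of _ K] exI[of _ \<eta>]) auto
qed

lemma slope_if_crossing_condition:
  fixes f h :: "'a::t2_space \<Rightarrow> real"
  assumes cpt: "compact \<Theta>" and cf: "continuous_on \<Theta> f" and ch: "continuous_on \<Theta> h"
    and cross: "crossing_condition \<Theta> f h"
  shows "\<exists>k. \<forall>\<theta>\<in>\<Theta>. h \<theta> < f \<theta> * k"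
proof -
  obtain c where c: "c > 0" and near_zero: "\<forall>\<theta>\<in>\<Theta>. \<bar>f \<theta>\<bar> < c \<longrightarrow> h \<theta> \<le> - c"
    using margin_near_zeros[OF cpt cf ch] cross by (auto simp: crossing_condition_def)
  obtain B where B: "\<forall>\<theta>\<in>\<Theta>. \<bar>h \<theta>\<bar> \<le> B"
    using compact_imp_bounded[OF compact_continuous_image[OF ch cpt]] by (auto simp: bounded_iff)
  obtain K \<eta> where "0 < K" "0 < \<eta>"
    and far: "\<forall>\<theta>\<in>\<Theta>. \<eta> \<le> \<bar>f \<theta>\<bar> \<longrightarrow> h \<theta> < K * \<bar>f \<theta>\<bar>"
    and near: "\<forall>\<theta>\<in>\<Theta>. \<forall>k. \<bar>f \<theta>\<bar> < \<eta> \<and> \<bar>k\<bar> \<le> K \<longrightarrow> h \<theta> < f \<theta> * k"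
    using slope_bounds_off_zeros[OF c near_zero B] by blast
  define P where "P = {\<theta>\<in>\<Theta>. f \<theta> \<in> {\<eta>..}}"
  define N where "N = {\<theta>\<in>\<Theta>. f \<theta> \<in> {..-\<eta>}}"
  have "compact P" "compact N"
    unfolding P_def N_def by (rule compact_Collect_preimage_closed[OF cpt cf], simp)+
  moreover have "continuous_on P (\<lambda>\<theta>. h \<theta> / f \<theta>)" "continuous_on N (\<lambda>\<theta>. h \<theta> / f \<theta>)"
    using \<open>0 < \<eta>\<close> by (auto simp: P_def N_def intro!: continuous_on_divide
        continuous_on_subset[OF cf] continuous_on_subset[OF ch])
  moreover have "\<forall>x\<in>P. \<forall>y\<in>N. h x / f x < h y / f y"
  proof (intro ballI)
    fix x y assume "x \<in> P" "y \<in> N"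
    then have "f y < 0" "0 < f x" "f x * h y - f y * h x < 0"
      using cross \<open>0 < \<eta>\<close> by (auto simp: P_def N_def crossing_condition_def)
    then show "h x / f x < h y / f y"
      by (simp add: divide_simps) (simp add: algebra_simps)
  qed
  moreover have "\<forall>x\<in>P. h x / f x < K" "\<forall>y\<in>N. - K < h y / f y"
    using far \<open>0 < \<eta>\<close> by (auto simp: P_def N_def divide_simps)
  ultimately obtain k where k: "\<bar>k\<bar> \<le> K" "\<forall>x\<in>P. h x / f x < k" "\<forall>y\<in>N. k < h y / f y"
    using value_between_compact_images[of P "\<lambda>\<theta>. h \<theta> / f \<theta>" N "\<lambda>\<theta>. h \<theta> / f \<theta>" K] \<open>0 < K\<close>
    by auto
  have "h \<theta> < f \<theta> * k" if \<theta>: "\<theta> \<in> \<Theta>" for \<theta>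
  proof -
    consider "\<eta> \<le> f \<theta>" | "f \<theta> \<le> - \<eta>" | "\<bar>f \<theta>\<bar> < \<eta>"
      by linarith
    then show ?thesis
    proof cases
      case 1
      then show ?thesis
        using k \<theta> \<open>0 < \<eta>\<close> by (auto simp: P_def divide_less_eq mult.commute)
    next
      case 2
      then show ?thesis
        using k \<theta> \<open>0 < \<eta>\<close> by (auto simp: N_def less_divide_eq mult.commute)
    next
      case 3
      then show ?thesis
        using near k \<theta> by blast
    qed
  qed
  then show ?thesis
    by blast
qed

section \<open>Beliefs\<close>

lemma space_prob_measures_on:
  assumes "M \<in> prob_measures_on \<Theta>"
  shows "space M = \<Theta>"
  using assms sets_eq_imp_space_eq[of M "restrict_space borel \<Theta>"]
  by (simp add: prob_measures_on_def space_restrict_space)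

lemma integrable_prob_measures_on:
  fixes f :: "real \<Rightarrow> real"
  assumes "M \<in> prob_measures_on \<Theta>" "compact \<Theta>" "continuous_on \<Theta> f"
  shows "integrable M f"
proof -
  interpret prob_space M
    using assms(1) by (simp add: prob_measures_on_def)
  have sets: "sets M = sets (restrict_space borel \<Theta>)"
    using assms(1) by (simp add: prob_measures_on_def)
  have "f \<in> borel_measurable M"
    unfolding measurable_cong_sets[OF sets refl]
    by (rule borel_measurable_continuous_on_restrict[OF assms(3)])
  moreover obtain B where "\<forall>x\<in>f ` \<Theta>. norm x \<le> B"
    using compact_imp_bounded[OF compact_continuous_image[OF assms(3,2)]] bounded_iff by blast
  ultimately show ?thesis
    using space_prob_measures_on[OF assms(1)] by (intro integrable_const_bound[where B = B]) auto
qed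

lemma integral_neg_if_slope:
  fixes f h :: "real \<Rightarrow> real"
  assumes M: "M \<in> prob_measures_on \<Theta>" and cpt: "compact \<Theta>"
    and cf: "continuous_on \<Theta> f" and ch: "continuous_on \<Theta> h"
    and slope: "\<forall>\<theta>\<in>\<Theta>. h \<theta> < f \<theta> * k" and mean_zero: "(\<integral>\<theta>. f \<theta> \<partial>M) = 0"
  shows "(\<integral>\<theta>. h \<theta> \<partial>M) < 0"
proof -
  interpret prob_space M
    using M by (simp add: prob_measures_on_def)
  have "integrable M h"
    by (rule integrable_prob_measures_on[OF M cpt ch])
  moreover have "integrable M (\<lambda>\<theta>. f \<theta> * k)"
    by (rule integrable_prob_measures_on[OF M cpt]) (intro continuous_intros cf)
  moreover have "AE \<theta> in M. h \<theta> < f \<theta> * k"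
    using slope space_prob_measures_on[OF M] by (intro AE_I2) auto
  ultimately have "(\<integral>\<theta>. h \<theta> \<partial>M) < (\<integral>\<theta>. f \<theta> * k \<partial>M)"
    by (rule integral_less_AE_space) (simp add: emeasure_space_1)
  then show ?thesis
    using mean_zero by simp
qed

definition two_point_measure :: "real set \<Rightarrow> real \<Rightarrow> real \<Rightarrow> real \<Rightarrow> real measure" where
  "two_point_measure \<Theta> p \<theta> \<theta>' =
     distr (measure_pmf (bernoulli_pmf p)) (restrict_space borel \<Theta>) (\<lambda>b. if b then \<theta> else \<theta>')"

lemma
  assumes "\<theta> \<in> \<Theta>" "\<theta>' \<in> \<Theta>" "0 \<le> p" "p \<le> 1"
  shows two_point_measure_in_prob_measures_on: "two_point_measure \<Theta> p \<theta> \<theta>' \<in> prob_measures_on \<Theta>"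
    and integral_two_point_measure: "continuous_on \<Theta> F \<Longrightarrow>
      (\<integral>x. F x \<partial>two_point_measure \<Theta> p \<theta> \<theta>') = p * F \<theta> + (1 - p) * (F \<theta>' :: real)"
proof -
  have choice: "(\<lambda>b. if b then \<theta> else \<theta>') \<in> measure_pmf (bernoulli_pmf p) \<rightarrow>\<^sub>M restrict_space borel \<Theta>"
    using assms by (auto simp: space_restrict_space)
  show "two_point_measure \<Theta> p \<theta> \<theta>' \<in> prob_measures_on \<Theta>"
    using prob_space.prob_space_distr[OF prob_space_measure_pmf choice]
    by (simp add: prob_measures_on_def two_point_measure_def)
  assume "continuous_on \<Theta> F"
  then have "F \<in> borel_measurable (restrict_space borel \<Theta>)"
    by (rule borel_measurable_continuous_on_restrict)
  then show "(\<integral>x. F x \<partial>two_point_measure \<Theta> p \<theta> \<theta>') = p * F \<theta> + (1 - p) * F \<theta>'"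
    using assms by (simp add: two_point_measure_def integral_distr[OF choice] mult.commute)
qed

lemma crossing_condition_if_integral_neg:
  fixes f h :: "real \<Rightarrow> real"
  assumes cf: "continuous_on \<Theta> f" and ch: "continuous_on \<Theta> h"
    and integral_neg: "\<forall>M\<in>prob_measures_on \<Theta>. (\<integral>\<theta>. f \<theta> \<partial>M) = 0 \<longrightarrow> (\<integral>\<theta>. h \<theta> \<partial>M) < 0"
  shows "crossing_condition \<Theta> f h"
  unfolding crossing_condition_def
proof (intro conjI ballI impI)
  fix \<theta> assume \<theta>: "\<theta> \<in> \<Theta>" and zero: "f \<theta> = 0"
  let ?M = "two_point_measure \<Theta> 1 \<theta> \<theta>"
  have "?M \<in> prob_measures_on \<Theta>"
    by (rule two_point_measure_in_prob_measures_on) (use \<theta> in auto)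
  then have "(\<integral>x. f x \<partial>?M) = 0 \<longrightarrow> (\<integral>x. h x \<partial>?M) < 0"
    using integral_neg by blast
  moreover have "(\<integral>x. F x \<partial>?M) = F \<theta>" if "continuous_on \<Theta> F" for F :: "real \<Rightarrow> real"
    using integral_two_point_measure[OF \<theta> \<theta>, of 1 F] that by simp
  ultimately show "h \<theta> < 0"
    using cf ch zero by simp
next
  fix \<theta> \<theta>' assume \<theta>: "\<theta> \<in> \<Theta>" "\<theta>' \<in> \<Theta>" and sign: "f \<theta> < 0 \<and> 0 < f \<theta>'"
  \<comment> \<open>The mixture of \<open>\<theta>\<close> and \<open>\<theta>'\<close> on which \<open>f\<close> has mean zero.\<close>
  define d where "d = f \<theta>' - f \<theta>"
  define p where "p = f \<theta>' / d"
  have d: "0 < d"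
    using sign by (simp add: d_def)
  have p: "0 \<le> p" "p \<le> 1" "1 - p = - f \<theta> / d"
    using sign d by (simp_all add: p_def d_def divide_simps)
  have "p * f \<theta> + (1 - p) * f \<theta>' = 0"
    unfolding p(3) using d by (simp add: p_def field_simps)
  moreover have "(\<integral>x. f x \<partial>two_point_measure \<Theta> p \<theta> \<theta>') = 0 \<longrightarrow>
      (\<integral>x. h x \<partial>two_point_measure \<Theta> p \<theta> \<theta>') < 0"
    using integral_neg two_point_measure_in_prob_measures_on[OF \<theta> p(1,2)] by blast
  ultimately have "p * h \<theta> + (1 - p) * h \<theta>' < 0"
    using integral_two_point_measure[OF \<theta> p(1,2)] cf ch by simp
  moreover have "p * h \<theta> + (1 - p) * h \<theta>' = (f \<theta>' * h \<theta> - f \<theta> * h \<theta>') / d"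
    unfolding p(3) using d by (simp add: p_def field_simps)
  ultimately show "f \<theta>' * h \<theta> - f \<theta> * h \<theta>' < 0"
    using d by (simp add: divide_less_0_iff)
qed

lemma integral_neg_iff_crossing_condition:
  fixes f h :: "real \<Rightarrow> real"
  assumes "compact \<Theta>" "continuous_on \<Theta> f" "continuous_on \<Theta> h"
  shows "(\<forall>M\<in>prob_measures_on \<Theta>. (\<integral>\<theta>. f \<theta> \<partial>M) = 0 \<longrightarrow> (\<integral>\<theta>. h \<theta> \<partial>M) < 0)
    \<longleftrightarrow> crossing_condition \<Theta> f h"
  using crossing_condition_if_integral_neg[OF assms(2,3)]
    integral_neg_if_slope[OF _ assms] slope_if_crossing_condition[OF assms]
  by blast

section \<open>Slopes depending continuously on the action\<close>

lemma negative_near_slice: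
  fixes F :: "'a::topological_space \<times> 'b::topological_space \<Rightarrow> real"
  assumes "compact \<Theta>" "continuous_on (A \<times> \<Theta>) F" "a \<in> A" "\<forall>\<theta>\<in>\<Theta>. F (a, \<theta>) < 0"
  shows "\<exists>U. open U \<and> a \<in> U \<and> (\<forall>b\<in>U \<inter> A. \<forall>\<theta>\<in>\<Theta>. F (b, \<theta>) < 0)"
proof -
  obtain W where W: "open W" "W \<inter> (A \<times> \<Theta>) = F -` {..<0} \<inter> (A \<times> \<Theta>)"
    using assms(2) open_lessThan unfolding continuous_on_open_invariant by blast
  have "{a} \<times> \<Theta> \<subseteq> W"
    using assms(3,4) W(2) by blast
  then obtain U where U: "a \<in> U" "open U" "U \<times> \<Theta> \<subseteq> W"
    using Elementary_Topology.tube_lemma[OF assms(1) W(1)] by blast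
  have "F (b, \<theta>) < 0" if "b \<in> U \<inter> A" "\<theta> \<in> \<Theta>" for b \<theta>
  proof -
    have "(b, \<theta>) \<in> W \<inter> (A \<times> \<Theta>)"
      using that U(3) by blast
    then show ?thesis
      unfolding W(2) by simp
  qed
  then show ?thesis
    using U(1,2) by blast
qed

lemma finite_cover_by_locally_constant_balls:
  fixes A :: "'a::metric_space set"
  assumes "compact A"
    and locally_const: "\<forall>a\<in>A. \<exists>U y. open U \<and> a \<in> U \<and> (\<forall>b\<in>U \<inter> A. y \<in> Q b)"
  shows "\<exists>T R Y. T \<subseteq> A \<and> finite T \<and> (\<forall>x\<in>A. \<exists>t\<in>T. dist x t < R t) \<and>
    (\<forall>t\<in>T. \<forall>b\<in>A. dist b t < R t \<longrightarrow> Y t \<in> Q b)"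
proof -
  have "\<exists>r y. 0 < r \<and> (\<forall>b\<in>A. dist b a < r \<longrightarrow> y \<in> Q b)" if a: "a \<in> A" for a
  proof -
    obtain U y where U: "open U" "a \<in> U" "\<forall>b\<in>U \<inter> A. y \<in> Q b"
      using locally_const a by blast
    then obtain r where r: "0 < r" "ball a r \<subseteq> U"
      using open_contains_ball by metis
    then have "\<forall>b\<in>A. dist b a < r \<longrightarrow> y \<in> Q b"
      using U(3) by (auto simp: subset_iff dist_commute)
    then show ?thesis
      using r(1) by blast
  qed
  then obtain R Y where RY: "\<And>a. a \<in> A \<Longrightarrow> 0 < R a \<and> (\<forall>b\<in>A. dist b a < R a \<longrightarrow> Y a \<in> Q b)"
    by metis
  have "A \<subseteq> (\<Union>t\<in>A. ball t (R t))"
    using RY by force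
  then obtain T where T: "T \<subseteq> A" "finite T" "A \<subseteq> (\<Union>t\<in>T. ball t (R t))"
    using compactE_image[OF assms(1), of A "\<lambda>t. ball t (R t)"] by blast
  moreover have "\<forall>x\<in>A. \<exists>t\<in>T. dist x t < R t"
    using T(3) by (force simp: dist_commute)
  ultimately show ?thesis
    using RY by blast
qed

lemma continuous_selection_if_locally_constant:
  fixes A :: "'a::metric_space set" and Q :: "'a \<Rightarrow> 'b::real_normed_vector set"
  assumes "compact A" and convex_Q: "\<forall>a\<in>A. convex (Q a)"
    and "\<forall>a\<in>A. \<exists>U y. open U \<and> a \<in> U \<and> (\<forall>b\<in>U \<inter> A. y \<in> Q b)"
  shows "\<exists>k. continuous_on A k \<and> (\<forall>a\<in>A. k a \<in> Q a)"
proof -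
  obtain T R Y where T: "T \<subseteq> A" "finite T" and covered: "\<forall>x\<in>A. \<exists>t\<in>T. dist x t < R t"
    and RY: "\<forall>t\<in>T. \<forall>b\<in>A. dist b t < R t \<longrightarrow> Y t \<in> Q b"
    using finite_cover_by_locally_constant_balls[OF assms(1,3)] by blast
  \<comment> \<open>A partition of unity subordinate to the finite cover by the balls.\<close>
  define \<phi> where "\<phi> t x = max 0 (R t - dist x t)" for t x
  define D where "D x = (\<Sum>t\<in>T. \<phi> t x)" for x
  define k where "k x = (\<Sum>t\<in>T. (\<phi> t x / D x) *\<^sub>R Y t)" for x
  have D_pos: "0 < D x" if x: "x \<in> A" for x
  proof -
    obtain t where "t \<in> T" "dist x t < R t"
      using covered x by blast
    then show ?thesis
      unfolding D_def by (intro sum_pos2[OF T(2)]) (auto simp: \<phi>_def)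
  qed
  have "continuous_on A k"
    unfolding k_def D_def \<phi>_def
    by (intro continuous_intros) (use D_pos in \<open>force simp: D_def \<phi>_def\<close>)
  moreover have "k x \<in> Q x" if x: "x \<in> A" for x
  proof -
    obtain t0 where t0: "t0 \<in> T" "dist x t0 < R t0"
      using covered x by blast
    \<comment> \<open>Where its weight vanishes, \<open>Y t\<close> may be replaced by a value known to lie in \<open>Q x\<close>.\<close>
    define y where "y t = (if dist x t < R t then Y t else Y t0)" for t
    have "k x = (\<Sum>t\<in>T. (\<phi> t x / D x) *\<^sub>R y t)"
      unfolding k_def y_def by (intro sum.cong) (auto simp: \<phi>_def)
    also have "\<dots> \<in> Q x"
    proof (rule convex_sum[OF T(2)])
      show "convex (Q x)"
        using convex_Q x by blast
      show "(\<Sum>t\<in>T. \<phi> t x / D x) = 1"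
        using D_pos[OF x] by (simp add: D_def flip: sum_divide_distrib)
      show "0 \<le> \<phi> t x / D x" for t
        using D_pos[OF x] by (simp add: \<phi>_def)
      show "y t \<in> Q x" if "t \<in> T" for t
        using RY x t0 that by (auto simp: y_def)
    qed
    finally show ?thesis .
  qed
  ultimately show ?thesis
    by blast
qed

lemma continuous_slope_if_crossing_condition:
  fixes u ua :: "'a::metric_space \<Rightarrow> 'b::t2_space \<Rightarrow> real"
  assumes "compact A" "compact \<Theta>"
    and cu: "continuous_on (A \<times> \<Theta>) (\<lambda>(a, \<theta>). u a \<theta>)"
    and cua: "continuous_on (A \<times> \<Theta>) (\<lambda>(a, \<theta>). ua a \<theta>)"
    and cross: "\<forall>a\<in>A. crossing_condition \<Theta> (u a) (ua a)"
  shows "\<exists>k. continuous_on A k \<and> (\<forall>a\<in>A. \<forall>\<theta>\<in>\<Theta>. ua a \<theta> < u a \<theta> * k a)"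
proof -
  define Q where "Q a = {k. \<forall>\<theta>\<in>\<Theta>. ua a \<theta> < u a \<theta> * k}" for a
  have "convex (Q a)" for a
  proof -
    have "convex {k. ua a \<theta> < u a \<theta> * k}" for \<theta>
      using convex_halfspace_gt[of "ua a \<theta>" "u a \<theta>"] by simp
    then have "convex (\<Inter>\<theta>\<in>\<Theta>. {k. ua a \<theta> < u a \<theta> * k})"
      by (rule convex_INT)
    moreover have "Q a = (\<Inter>\<theta>\<in>\<Theta>. {k. ua a \<theta> < u a \<theta> * k})"
      by (auto simp: Q_def)
    ultimately show ?thesis
      by simp
  qed
  moreover have "\<exists>U y. open U \<and> a \<in> U \<and> (\<forall>b\<in>U \<inter> A. y \<in> Q b)" if a: "a \<in> A" for a
  proof -
    obtain k0 where "\<forall>\<theta>\<in>\<Theta>. ua a \<theta> < u a \<theta> * k0"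
      using slope_if_crossing_condition[OF assms(2) continuous_on_slice[OF cu a]
          continuous_on_slice[OF cua a]] cross a by blast
    moreover have "continuous_on (A \<times> \<Theta>) (\<lambda>p. (\<lambda>(a, \<theta>). ua a \<theta>) p - (\<lambda>(a, \<theta>). u a \<theta>) p * k0)"
      using cu cua by (intro continuous_intros)
    ultimately obtain U where "open U" "a \<in> U"
      "\<forall>b\<in>U \<inter> A. \<forall>\<theta>\<in>\<Theta>. ua b \<theta> - u b \<theta> * k0 < 0"
      using negative_near_slice[OF assms(2) _ a] by force
    then show ?thesis
      by (auto simp: Q_def)
  qed
  ultimately obtain k where "continuous_on A k" "\<forall>a\<in>A. k a \<in> Q a"
    using continuous_selection_if_locally_constant[OF assms(1)] by blast
  then show ?thesis
    by (auto simp: Q_def)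
qed

section \<open>Normalising by a positive factor\<close>

lemma has_real_derivative_exp_integral:
  assumes "continuous_on {l..r} k" "a \<in> {l..r}"
  shows "((\<lambda>x. exp (integral {l..x} k)) has_real_derivative exp (integral {l..a} k) * k a)
           (at a within {l..r})"
  using DERIV_chain2[OF DERIV_exp integral_has_real_derivative[OF assms]] .

lemma has_real_derivative_divide_pos:
  assumes "(U has_real_derivative U') (at a within S)" "(G has_real_derivative G') (at a within S)"
    and "0 < G a"
  shows "((\<lambda>b. U b / G b) has_real_derivative (U' - U a * (G' / G a)) / G a) (at a within S)"
proof -
  have "((\<lambda>b. U b / G b) has_real_derivative (U' * G a - U a * G') / (G a * G a)) (at a within S)"
    using DERIV_divide[OF assms(1,2)] assms(3) by simp
  moreover have "(U' * G a - U a * G') / (G a * G a) = (U' - U a * (G' / G a)) / G a"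
    using assms(3) by (simp add: field_simps)
  ultimately show ?thesis
    by simp
qed

lemma decreasing_quotient_if_continuous_slope:
  fixes u ua :: "real \<Rightarrow> 'a \<Rightarrow> real"
  assumes ck: "continuous_on {l..r} k" and slope: "\<forall>a\<in>{l..r}. \<forall>\<theta>\<in>\<Theta>. ua a \<theta> < u a \<theta> * k a"
    and du: "\<And>a \<theta>. a \<in> {l..r} \<Longrightarrow> \<theta> \<in> \<Theta> \<Longrightarrow>
      ((\<lambda>b. u b \<theta>) has_real_derivative ua a \<theta>) (at a within {l..r})"
  shows "\<exists>g. (\<forall>a\<in>{l..r}. 0 < g a) \<and> g differentiable_on {l..r} \<and>
    (\<forall>a\<in>{l..r}. \<forall>\<theta>\<in>\<Theta>. \<exists>d. ((\<lambda>b. u b \<theta> / g b) has_real_derivative d) (at a within {l..r}) \<and> d < 0)"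
proof -
  define g where "g = (\<lambda>x. exp (integral {l..x} k))"
  have dg: "(g has_real_derivative g a * k a) (at a within {l..r})" if "a \<in> {l..r}" for a
    unfolding g_def by (rule has_real_derivative_exp_integral[OF ck that])
  have g_pos: "0 < g a" for a
    by (simp add: g_def)
  have "g differentiable_on {l..r}"
    unfolding differentiable_on_def real_differentiable_def using dg by blast
  moreover have "\<exists>d. ((\<lambda>b. u b \<theta> / g b) has_real_derivative d) (at a within {l..r}) \<and> d < 0"
    if "a \<in> {l..r}" "\<theta> \<in> \<Theta>" for a \<theta>
  proof -
    have "((\<lambda>b. u b \<theta> / g b) has_real_derivative (ua a \<theta> - u a \<theta> * k a) / g a) (at a within {l..r})"
      using has_real_derivative_divide_pos[OF du[OF that] dg[OF that(1)] g_pos] g_pos[of a] by simp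
    moreover have "(ua a \<theta> - u a \<theta> * k a) / g a < 0"
      using slope that g_pos[of a] by (simp add: divide_neg_pos)
    ultimately show ?thesis
      by blast
  qed
  ultimately show ?thesis
    using g_pos by blast
qed

lemma slope_if_decreasing_quotient:
  assumes "l < r" "a \<in> {l..r}"
    and "(U has_real_derivative U') (at a within {l..r})"
    and "(G has_real_derivative G') (at a within {l..r})" "0 < G a"
    and "((\<lambda>b. U b / G b) has_real_derivative d) (at a within {l..r})" "d < 0"
  shows "U' < U a * (G' / G a)"
proof -
  have "d = (U' - U a * (G' / G a)) / G a"
    using vector_derivative_unique_within_closed_interval[of l r a "\<lambda>b. U b / G b"]
      has_real_derivative_divide_pos[OF assms(3-5)] assms(1,2,6)
    by (simp add: has_real_derivative_iff_has_vector_derivative)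
  then show ?thesis
    using assms(5,7) by (simp add: divide_less_0_iff)
qed

lemma crossing_condition_if_decreasing_quotient:
  fixes u ua :: "real \<Rightarrow> 'a \<Rightarrow> real"
  assumes "l < r" and a: "a \<in> {l..r}"
    and du: "\<And>a \<theta>. a \<in> {l..r} \<Longrightarrow> \<theta> \<in> \<Theta> \<Longrightarrow>
      ((\<lambda>b. u b \<theta>) has_real_derivative ua a \<theta>) (at a within {l..r})"
    and g_pos: "\<forall>a\<in>{l..r}. 0 < g a" and g_diff: "g differentiable_on {l..r}"
    and decreasing: "\<forall>a\<in>{l..r}. \<forall>\<theta>\<in>\<Theta>. \<exists>d.
      ((\<lambda>b. u b \<theta> / g b) has_real_derivative d) (at a within {l..r}) \<and> d < 0"
  shows "crossing_condition \<Theta> (u a) (ua a)"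
proof -
  obtain G' where G': "(g has_real_derivative G') (at a within {l..r})"
    using g_diff a unfolding differentiable_on_def real_differentiable_def by blast
  have "ua a \<theta> < u a \<theta> * (G' / g a)" if \<theta>: "\<theta> \<in> \<Theta>" for \<theta>
  proof -
    obtain d where "((\<lambda>b. u b \<theta> / g b) has_real_derivative d) (at a within {l..r})" "d < 0"
      using decreasing a \<theta> by blast
    then show ?thesis
      using slope_if_decreasing_quotient[OF assms(1) a du[OF a \<theta>] G'] g_pos a by simp
  qed
  then show ?thesis
    by (intro crossing_condition_if_slope) blast
qed

theorem lemma4:
  fixes \<Theta> :: "real set" and u ua :: "real \<Rightarrow> real \<Rightarrow> real"
  assumes "compact \<Theta>" and "\<Theta> \<subseteq> {0..1}"
    and "continuous_on ({0..1} \<times> \<Theta>) (\<lambda>(a, \<theta>). u a \<theta>)"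
    and "\<And>a \<theta>. a \<in> {0..1} \<Longrightarrow> \<theta> \<in> \<Theta> \<Longrightarrow>
           ((\<lambda>b. u b \<theta>) has_real_derivative ua a \<theta>) (at a within {0..1})"
    and "continuous_on ({0..1} \<times> \<Theta>) (\<lambda>(a, \<theta>). ua a \<theta>)"
  shows "((\<forall>a\<in>{0..1}. \<forall>M\<in>prob_measures_on \<Theta>.
              (\<integral>\<theta>. u a \<theta> \<partial>M) = 0 \<longrightarrow> (\<integral>\<theta>. ua a \<theta> \<partial>M) < 0)
          \<longleftrightarrow>
          (\<forall>\<theta>\<in>\<Theta>. \<forall>\<theta>'\<in>\<Theta>. \<forall>a\<in>{0..1}.
              (u a \<theta> = 0 \<longrightarrow> ua a \<theta> < 0) \<and>
              (u a \<theta> < 0 \<and> 0 < u a \<theta>' \<longrightarrow>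
                 u a \<theta>' * ua a \<theta> - u a \<theta> * ua a \<theta>' < 0)))
       \<and>
         ((\<forall>\<theta>\<in>\<Theta>. \<forall>\<theta>'\<in>\<Theta>. \<forall>a\<in>{0..1}.
              (u a \<theta> = 0 \<longrightarrow> ua a \<theta> < 0) \<and>
              (u a \<theta> < 0 \<and> 0 < u a \<theta>' \<longrightarrow>
                 u a \<theta>' * ua a \<theta> - u a \<theta> * ua a \<theta>' < 0))
          \<longleftrightarrow>
          (\<exists>g :: real \<Rightarrow> real.
              (\<forall>a\<in>{0..1}. 0 < g a) \<and> g differentiable_on {0..1} \<and>
              (\<forall>a\<in>{0..1}. \<forall>\<theta>\<in>\<Theta>. \<exists>d.
                 ((\<lambda>b. u b \<theta> / g b) has_real_derivative d) (at a within {0..1}) \<and> d < 0)))"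
    (is "(?C1 \<longleftrightarrow> ?C2) \<and> (?C2 \<longleftrightarrow> ?C3)")
proof -
  note cpt = assms(1) and cu = assms(3) and du = assms(4) and cua = assms(5)
  let ?cross = "\<forall>a\<in>{0..1}. crossing_condition \<Theta> (u a) (ua a)"
  have slices: "continuous_on \<Theta> (u a)" "continuous_on \<Theta> (ua a)" if "a \<in> {0..1}" for a
    using continuous_on_slice[OF cu that] continuous_on_slice[OF cua that] by auto
  have "?C1 \<longleftrightarrow> ?cross"
    using integral_neg_iff_crossing_condition[OF cpt slices] by blast
  moreover have "?C2 \<longleftrightarrow> ?cross"
    unfolding crossing_condition_def by blast
  moreover have ?C3 if cross: ?cross
  proof -
    obtain k where "continuous_on {0..1} k" "\<forall>a\<in>{0..1}. \<forall>\<theta>\<in>\<Theta>. ua a \<theta> < u a \<theta> * k a"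
      using continuous_slope_if_crossing_condition[OF compact_Icc cpt cu cua cross] by blast
    then show ?thesis
      by (rule decreasing_quotient_if_continuous_slope[OF _ _ du])
  qed
  moreover have ?cross if ?C3
  proof -
    obtain g where g: "\<forall>a\<in>{0..1}. 0 < g a" "g differentiable_on {0..1}"
      "\<forall>a\<in>{0..1}. \<forall>\<theta>\<in>\<Theta>. \<exists>d.
        ((\<lambda>b. u b \<theta> / g b) has_real_derivative d) (at a within {0..1}) \<and> d < 0"
      using \<open>?C3\<close> by blast
    show ?thesis
      using crossing_condition_if_decreasing_quotient[OF zero_less_one _ du g] by blast
  qed
  ultimately show ?thesis
    by blast
qed

end
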